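(* The eigenvalues of $\mathcal F_\omega^{-1}\mathcal R$ cluster at $0$ from the right half-plane as $\omega\to+\infty$. Precisely: for every $\delta>0$ there is $\Omega>0$ such that, for every $\omega>\Omega$, every eigenvalue $\eta$ of $\mathcal F_\omega^{-1}\mathcal R$ satisfies $$0<\operatorname{Re}\eta<\delta\quad\text{and}\quad|\operatorname{Im}\eta|<\delta .$$
   Context: Let $M\ge 1$ be an integer and let $I$ denote an identity matrix of the appropriate size. Let $T\in\mathbb R^{M\times M}$ be real symmetric positive definite. Let $D\in\mathbb R^{M\times M}$ be diagonal with nonnegative diagonal entries. Define the block matrices in $\mathbb R^{2M\times 2M}$: $$\mathcal R=\begin{bmatrix} I & T-D\\ D-T & I\end{bmatrix},\qquad \mathcal T=\begin{bmatrix} I & T\\ -T & I\end{bmatrix},\qquad \mathcal D=\begin{bmatrix} 0 & -D\\ D & 0\end{bmatrix}.$$ Thus $\mathcal R=\mathcal T+\mathcal D$. For $\omega>0$, the NASS preconditioner is $$\mathcal F_\omega=\tfrac{1}{2\omega}(\omega I+\mathcal T)(\omega I+\mathcal D).$$ *)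

theory Defs
  imports "Jordan_Normal_Form.Char_Poly"
begin

definition sym_pos_def_mat :: "nat \<Rightarrow> real mat \<Rightarrow> bool" where
  "sym_pos_def_mat n T \<longleftrightarrow> T \<in> carrier_mat n n \<and> transpose_mat T = T \<and>
     (\<forall>x \<in> carrier_vec n. x \<noteq> 0\<^sub>v n \<longrightarrow> x \<bullet> (T *\<^sub>v x) > 0)"

definition calR :: "nat \<Rightarrow> real mat \<Rightarrow> real mat \<Rightarrow> real mat" where
  "calR n T D = four_block_mat (1\<^sub>m n) (T - D) (D - T) (1\<^sub>m n)"

definition calT :: "nat \<Rightarrow> real mat \<Rightarrow> real mat" where
  "calT n T = four_block_mat (1\<^sub>m n) T (- T) (1\<^sub>m n)"

definition calD :: "nat \<Rightarrow> real mat \<Rightarrow> real mat" where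
  "calD n D = four_block_mat (0\<^sub>m n n) (- D) D (0\<^sub>m n n)"

definition NASS_prec :: "nat \<Rightarrow> real mat \<Rightarrow> real mat \<Rightarrow> real \<Rightarrow> real mat" where
  "NASS_prec n T D \<omega> = (1 / (2 * \<omega>)) \<cdot>\<^sub>m
     ((\<omega> \<cdot>\<^sub>m 1\<^sub>m (2 * n) + calT n T) * (\<omega> \<cdot>\<^sub>m 1\<^sub>m (2 * n) + calD n D))"

end

theory Submission
  imports Defs
begin

text \<open>
  Let \<open>\<eta>\<close> be an eigenvalue with eigenvector \<open>x\<close>, so that \<open>\<R> x = \<eta> \<F>\<^sub>\<omega> x\<close>. Testing against \<open>x\<close>
  gives \<open>r = \<eta> f\<close> with \<open>r = x\<^sup>* \<R> x\<close> and \<open>f = x\<^sup>* \<F>\<^sub>\<omega> x\<close>. Because \<open>\<R>\<close> is the identity plus a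
  skew-symmetric matrix, \<open>Re r = |x|\<^sup>2\<close>, while \<open>|r| \<le> C\<^sub>r |x|\<^sup>2\<close>. Expanding
  \<open>\<F>\<^sub>\<omega> = \<omega>/2 I + (\<T> + \<D>)/2 + \<T>\<D>/(2\<omega>)\<close> shows \<open>f = \<omega>/2 |x|\<^sup>2 + O(|x|\<^sup>2)\<close>. Hence
  \<open>|\<eta>| = |r|/|f| = O(1/\<omega>)\<close>, and \<open>Re (r f\<^sup>*) > 0\<close> for large \<omega>, i.e. \<open>Re \<eta> > 0\<close>.
\<close>

definition vec_norm2 :: "complex vec \<Rightarrow> real" where
  "vec_norm2 x = (\<Sum>i<dim_vec x. (cmod (x $ i))\<^sup>2)"

definition quad_form :: "real mat \<Rightarrow> complex vec \<Rightarrow> complex" where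
  "quad_form A x = (\<Sum>i<dim_vec x. \<Sum>j<dim_vec x. cnj (x $ i) * of_real (A $$ (i, j)) * x $ j)"

definition abs_entry_sum :: "real mat \<Rightarrow> real" where
  "abs_entry_sum A = (\<Sum>i<dim_row A. \<Sum>j<dim_col A. \<bar>A $$ (i, j)\<bar>)"

lemma abs_entry_sum_nonneg: "abs_entry_sum A \<ge> 0"
  unfolding abs_entry_sum_def by (intro sum_nonneg) auto

lemma norm_square_le_vec_norm2: "i < dim_vec x \<Longrightarrow> (cmod (x $ i))\<^sup>2 \<le> vec_norm2 x"
  unfolding vec_norm2_def by (rule member_le_sum) auto

lemma vec_norm2_pos:
  assumes "x \<in> carrier_vec n" "x \<noteq> 0\<^sub>v n"
  shows "vec_norm2 x > 0"
proof -
  obtain k where "k < n" "x $ k \<noteq> 0"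
    using assms by (metis eq_vecI carrier_vecD index_zero_vec)
  then have "0 < (cmod (x $ k))\<^sup>2" "(cmod (x $ k))\<^sup>2 \<le> vec_norm2 x"
    using assms(1) norm_square_le_vec_norm2[of k x] by auto
  then show ?thesis by linarith
qed

lemma quad_form_add:
  assumes "A \<in> carrier_mat n n" "B \<in> carrier_mat n n" "x \<in> carrier_vec n"
  shows "quad_form (A + B) x = quad_form A x + quad_form B x"
  using assms unfolding quad_form_def by (simp add: sum.distrib[symmetric] algebra_simps)

lemma quad_form_smult:
  assumes "A \<in> carrier_mat n n" "x \<in> carrier_vec n"
  shows "quad_form (c \<cdot>\<^sub>m A) x = of_real c * quad_form A x"
  using assms unfolding quad_form_def by (simp add: sum_distrib_left algebra_simps)

lemma quad_form_one:
  assumes "x \<in> carrier_vec n"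
  shows "quad_form (1\<^sub>m n) x = of_real (vec_norm2 x)"
proof -
  have "quad_form (1\<^sub>m n) x = (\<Sum>i<n. \<Sum>j<n. if i = j then cnj (x $ i) * x $ j else 0)"
    using assms unfolding quad_form_def by (intro sum.cong) auto
  also have "\<dots> = (\<Sum>i<n. of_real ((cmod (x $ i))\<^sup>2))"
    by (simp add: complex_norm_square mult.commute del: of_real_power)
  finally show ?thesis
    using assms unfolding vec_norm2_def by simp
qed

lemma norm_quad_form_le:
  assumes "A \<in> carrier_mat n n" "x \<in> carrier_vec n"
  shows "cmod (quad_form A x) \<le> abs_entry_sum A * vec_norm2 x"
proof -
  have entry: "cmod (x $ i) * cmod (x $ j) \<le> vec_norm2 x" if "i < n" "j < n" for i j
  proof -
    have "cmod (x $ i) * cmod (x $ j) \<le> ((cmod (x $ i))\<^sup>2 + (cmod (x $ j))\<^sup>2) / 2"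
      using sum_squares_bound[of "cmod (x $ i)" "cmod (x $ j)"]
      by (simp add: power2_eq_square algebra_simps)
    also have "\<dots> \<le> vec_norm2 x"
      using that assms(2) norm_square_le_vec_norm2[of i x] norm_square_le_vec_norm2[of j x] by simp
    finally show ?thesis .
  qed
  have "cmod (quad_form A x) \<le> (\<Sum>i<n. \<Sum>j<n. cmod (cnj (x $ i) * of_real (A $$ (i, j)) * x $ j))"
    using assms(2) unfolding quad_form_def by (auto intro: order_trans[OF norm_sum sum_mono[OF norm_sum]])
  also have "\<dots> \<le> (\<Sum>i<n. \<Sum>j<n. \<bar>A $$ (i, j)\<bar> * vec_norm2 x)"
  proof (intro sum_mono)
    fix i j assume "i \<in> {..<n}" "j \<in> {..<n}"
    then have "\<bar>A $$ (i, j)\<bar> * (cmod (x $ i) * cmod (x $ j)) \<le> \<bar>A $$ (i, j)\<bar> * vec_norm2 x"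
      using entry by (simp add: mult_left_mono)
    then show "cmod (cnj (x $ i) * of_real (A $$ (i, j)) * x $ j) \<le> \<bar>A $$ (i, j)\<bar> * vec_norm2 x"
      by (simp add: norm_mult algebra_simps)
  qed
  also have "\<dots> = abs_entry_sum A * vec_norm2 x"
    using assms(1) unfolding abs_entry_sum_def by (simp add: sum_distrib_right)
  finally show ?thesis .
qed

lemma Re_quad_form_eq_vec_norm2:
  assumes A: "A \<in> carrier_mat n n" and x: "x \<in> carrier_vec n"
    and sym_part: "A + transpose_mat A = 2 \<cdot>\<^sub>m 1\<^sub>m n"
  shows "Re (quad_form A x) = vec_norm2 x"
proof -
  have entry: "A $$ (i, j) + A $$ (j, i) = (if i = j then 2 else 0)" if "i < n" "j < n" for i j
    using arg_cong[OF sym_part, of "\<lambda>B. B $$ (i, j)"] that A by auto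
  have "cnj (quad_form A x) = (\<Sum>i<n. \<Sum>j<n. cnj (x $ i) * of_real (A $$ (j, i)) * x $ j)"
    using x unfolding quad_form_def
    by (subst sum.swap) (simp add: cnj_sum mult.commute mult.left_commute)
  then have "quad_form A x + cnj (quad_form A x)
      = (\<Sum>i<n. \<Sum>j<n. cnj (x $ i) * of_real (A $$ (i, j) + A $$ (j, i)) * x $ j)"
    using x unfolding quad_form_def by (simp add: sum.distrib[symmetric] algebra_simps)
  also have "\<dots> = (\<Sum>i<n. \<Sum>j<n. if i = j then 2 * (cnj (x $ i) * x $ j) else 0)"
    using entry by (intro sum.cong) auto
  also have "\<dots> = of_real (2 * vec_norm2 x)"
    using x by (simp add: vec_norm2_def complex_norm_square mult.commute sum_distrib_left
        del: of_real_power)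
  finally show ?thesis by (simp add: complex_add_cnj)
qed

lemma quad_form_eq_sum_mult_mat_vec:
  assumes "A \<in> carrier_mat n n" "x \<in> carrier_vec n"
  shows "quad_form A x = (\<Sum>i<n. cnj (x $ i) * (map_mat of_real A *\<^sub>v x) $ i)"
  using assms unfolding quad_form_def
  by (intro sum.cong) (simp_all add: scalar_prod_def sum_distrib_left mult.assoc lessThan_atLeast0)

lemma quad_form_generalized_eigen:
  assumes "A \<in> carrier_mat n n" "B \<in> carrier_mat n n" "x \<in> carrier_vec n"
    and "map_mat of_real A *\<^sub>v x = \<eta> \<cdot>\<^sub>v (map_mat of_real B *\<^sub>v x)"
  shows "quad_form A x = \<eta> * quad_form B x"
  using assms
  by (simp add: quad_form_eq_sum_mult_mat_vec sum_distrib_left mult.left_commute)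

lemma eigenvector_left_inverse:
  fixes F G R :: "'a :: field mat"
  assumes "F \<in> carrier_mat n n" "G \<in> carrier_mat n n" "R \<in> carrier_mat n n"
    and "F * G = 1\<^sub>m n" and x: "x \<in> carrier_vec n" "(G * R) *\<^sub>v x = \<eta> \<cdot>\<^sub>v x"
  shows "R *\<^sub>v x = \<eta> \<cdot>\<^sub>v (F *\<^sub>v x)"
proof -
  have "F * (G * R) = R"
    using assms by (simp add: assoc_mult_mat[symmetric, of F n n G n R n])
  then have "R *\<^sub>v x = F *\<^sub>v ((G * R) *\<^sub>v x)"
    using assms by (metis assoc_mult_mat_vec mult_carrier_mat)
  also have "\<dots> = \<eta> \<cdot>\<^sub>v (F *\<^sub>v x)"
    using assms by (simp add: mult_mat_vec[of F n n x \<eta>])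
  finally show ?thesis .
qed

lemma calR_carrier: "calR M T D \<in> carrier_mat (2 * M) (2 * M)"
  unfolding calR_def mult_2 by (rule four_block_carrier_mat) auto

lemma calT_carrier: "calT M T \<in> carrier_mat (2 * M) (2 * M)"
  unfolding calT_def mult_2 by (rule four_block_carrier_mat) auto

lemma calD_carrier: "calD M D \<in> carrier_mat (2 * M) (2 * M)"
  unfolding calD_def mult_2 by (rule four_block_carrier_mat) auto

lemma NASS_prec_carrier: "NASS_prec M T D \<omega> \<in> carrier_mat (2 * M) (2 * M)"
  unfolding NASS_prec_def using calT_carrier[of M T] calD_carrier[of M D]
  by (auto intro!: mult_carrier_mat add_carrier_mat)

lemma calR_plus_transpose:
  assumes T: "T \<in> carrier_mat M M" "transpose_mat T = T"
    and D: "D \<in> carrier_mat M M" "diagonal_mat D"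
  shows "calR M T D + transpose_mat (calR M T D) = 2 \<cdot>\<^sub>m 1\<^sub>m (2 * M)"
proof -
  have T_sym: "T $$ (a, b) = T $$ (b, a)" if "a < M" "b < M" for a b
    using T that by (metis carrier_matD index_transpose_mat(1))
  have D_sym: "D $$ (a, b) = D $$ (b, a)" if "a < M" "b < M" for a b
    using D that unfolding diagonal_mat_def by (cases "a = b") auto
  show ?thesis
    using T(1) D(1) T_sym D_sym calR_carrier[of M T D]
    by (intro eq_matI) (auto simp: calR_def)
qed

lemma shifted_identity_mult:
  fixes A B :: "'a :: comm_ring_1 mat"
  assumes "A \<in> carrier_mat n n" "B \<in> carrier_mat n n"
  shows "(c \<cdot>\<^sub>m 1\<^sub>m n + A) * (c \<cdot>\<^sub>m 1\<^sub>m n + B)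
      = (c * c) \<cdot>\<^sub>m 1\<^sub>m n + c \<cdot>\<^sub>m B + (c \<cdot>\<^sub>m A + A * B)"
proof -
  have cI: "c \<cdot>\<^sub>m 1\<^sub>m n \<in> carrier_mat n n" by simp
  have "(c \<cdot>\<^sub>m 1\<^sub>m n + A) * (c \<cdot>\<^sub>m 1\<^sub>m n + B)
      = c \<cdot>\<^sub>m 1\<^sub>m n * (c \<cdot>\<^sub>m 1\<^sub>m n + B) + A * (c \<cdot>\<^sub>m 1\<^sub>m n + B)"
    using assms by (intro add_mult_distrib_mat[of _ n n]) auto
  also have "\<dots> = (c \<cdot>\<^sub>m 1\<^sub>m n * (c \<cdot>\<^sub>m 1\<^sub>m n) + c \<cdot>\<^sub>m 1\<^sub>m n * B) + (A * (c \<cdot>\<^sub>m 1\<^sub>m n) + A * B)"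
    using mult_add_distrib_mat[OF cI cI assms(2)] mult_add_distrib_mat[OF assms(1) cI assms(2)] by simp
  also have "c \<cdot>\<^sub>m 1\<^sub>m n * (c \<cdot>\<^sub>m 1\<^sub>m n) = (c * c) \<cdot>\<^sub>m 1\<^sub>m n"
  proof -
    have "c \<cdot>\<^sub>m 1\<^sub>m n * (c \<cdot>\<^sub>m 1\<^sub>m n) = c \<cdot>\<^sub>m (c \<cdot>\<^sub>m 1\<^sub>m n)"
      using mult_smult_assoc_mat[of "1\<^sub>m n" n n "c \<cdot>\<^sub>m 1\<^sub>m n" n c] by simp
    then show ?thesis by (auto intro!: eq_matI)
  qed
  also have "c \<cdot>\<^sub>m 1\<^sub>m n * B = c \<cdot>\<^sub>m B"
    using assms mult_smult_assoc_mat[of "1\<^sub>m n" n n B n c] by simp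
  also have "A * (c \<cdot>\<^sub>m 1\<^sub>m n) = c \<cdot>\<^sub>m A"
    using assms mult_smult_distrib[of A n n "1\<^sub>m n" n c] by simp
  finally show ?thesis .
qed

lemma quad_form_NASS_prec:
  assumes "x \<in> carrier_vec (2 * M)" "\<omega> \<noteq> 0"
  shows "quad_form (NASS_prec M T D \<omega>) x = of_real (\<omega> / 2 * vec_norm2 x)
      + (quad_form (calT M T) x + quad_form (calD M D) x) / 2
      + quad_form (calT M T * calD M D) x / of_real (2 * \<omega>)"
  using assms calT_carrier[of M T] calD_carrier[of M D]
  by (simp add: NASS_prec_def shifted_identity_mult quad_form_smult[of _ "2 * M"]
      quad_form_add[of _ "2 * M"] quad_form_one field_simps)

lemma norm_quad_form_NASS_prec_sub_le:
  assumes x: "x \<in> carrier_vec (2 * M)" and \<omega>: "\<omega> \<ge> 1"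
  shows "cmod (quad_form (NASS_prec M T D \<omega>) x - of_real (\<omega> / 2 * vec_norm2 x))
      \<le> (abs_entry_sum (calT M T) + abs_entry_sum (calD M D)
          + abs_entry_sum (calT M T * calD M D)) / 2 * vec_norm2 x"
proof -
  let ?qT = "quad_form (calT M T) x" and ?qD = "quad_form (calD M D) x"
    and ?qTD = "quad_form (calT M T * calD M D) x"
  have TD: "calT M T * calD M D \<in> carrier_mat (2 * M) (2 * M)"
    using calT_carrier calD_carrier by (rule mult_carrier_mat)
  have "quad_form (NASS_prec M T D \<omega>) x - of_real (\<omega> / 2 * vec_norm2 x)
      = (?qT + ?qD) / 2 + ?qTD / of_real (2 * \<omega>)"
    using quad_form_NASS_prec[OF x, of \<omega> T D] \<omega> by simp
  also have "cmod \<dots> \<le> cmod ((?qT + ?qD) / 2) + cmod (?qTD / of_real (2 * \<omega>))"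
    by (rule norm_triangle_ineq)
  also have "\<dots> \<le> (cmod ?qT + cmod ?qD + cmod ?qTD) / 2"
  proof -
    have "cmod ?qTD / \<omega> \<le> cmod ?qTD"
      using \<omega> by (simp add: divide_le_eq mult_le_cancel_left1)
    then show ?thesis
      using \<omega> norm_triangle_ineq[of ?qT ?qD] by (simp add: norm_divide)
  qed
  also have "\<dots> \<le> (abs_entry_sum (calT M T) * vec_norm2 x + abs_entry_sum (calD M D) * vec_norm2 x
      + abs_entry_sum (calT M T * calD M D) * vec_norm2 x) / 2"
    using norm_quad_form_le[OF calT_carrier[of M T] x] norm_quad_form_le[OF calD_carrier[of M D] x]
      norm_quad_form_le[OF TD x] by simp
  finally show ?thesis
    by (simp add: algebra_simps)
qed

lemma quotient_clusters_at_zero: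
  fixes r f \<eta> :: complex and N C\<^sub>r C \<omega> \<delta> :: real
  assumes N: "N > 0" and r: "Re r = N" "cmod r \<le> C\<^sub>r * N"
    and f: "cmod (f - of_real (\<omega> / 2 * N)) \<le> C * N"
    and \<delta>: "\<delta> > 0" and \<omega>: "\<omega> > 2 * (C + C * C\<^sub>r + C\<^sub>r / \<delta>)"
    and eq: "r = \<eta> * f"
  shows "0 < Re \<eta> \<and> Re \<eta> < \<delta> \<and> \<bar>Im \<eta>\<bar> < \<delta>"
proof -
  define a where "a = \<omega> / 2 - C"
  have "0 \<le> C * N" using f norm_ge_zero order_trans by blast
  then have "C \<ge> 0" using N by (simp add: zero_le_mult_iff)
  have "N \<le> C\<^sub>r * N" using r complex_Re_le_cmod[of r] by linarith
  then have "C\<^sub>r \<ge> 1" using N by simp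
  then have "0 \<le> C * C\<^sub>r" "0 \<le> C\<^sub>r / \<delta>" using \<open>C \<ge> 0\<close> \<delta> by simp_all
  then have a: "C * C\<^sub>r < a" "C\<^sub>r / \<delta> < a" "0 < a"
    using \<omega> \<open>C \<ge> 0\<close> unfolding a_def by auto
  have Re_f: "a * N \<le> Re f" and Im_f: "\<bar>Im f\<bar> \<le> C * N"
    using abs_Re_le_cmod[of "f - of_real (\<omega> / 2 * N)"] abs_Im_le_cmod[of "f - of_real (\<omega> / 2 * N)"] f
    unfolding a_def by (auto simp: algebra_simps)
  have "0 < a * N" using a N by simp
  then have norm_f: "a * N \<le> cmod f" "f \<noteq> 0"
    using Re_f complex_Re_le_cmod[of f] by auto
  have "cmod \<eta> * (a * N) \<le> C\<^sub>r * N"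
    using mult_left_mono[OF norm_f(1) norm_ge_zero[of \<eta>]] r(2) eq by (simp add: norm_mult)
  then have "cmod \<eta> * a \<le> C\<^sub>r" using N by (simp add: mult.assoc[symmetric])
  also have "C\<^sub>r < \<delta> * a" using a(2) \<delta> by (simp add: field_simps)
  finally have norm_\<eta>: "cmod \<eta> < \<delta>" using a by simp
  have "\<bar>Im r * Im f\<bar> \<le> (C\<^sub>r * N) * (C * N)"
    unfolding abs_mult using abs_Im_le_cmod[of r] r(2) Im_f \<open>C \<ge> 0\<close> N
    by (intro mult_mono) auto
  moreover have "N * (a * N) \<le> Re r * Re f" using r(1) Re_f N by simp
  moreover have "(C\<^sub>r * N) * (C * N) < N * (a * N)" using a(1) N by (simp add: mult.commute)
  ultimately have "0 < Re r * Re f + Im r * Im f" by linarith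
  moreover have "0 < (Re f)\<^sup>2 + (Im f)\<^sup>2" using \<open>0 < a * N\<close> Re_f by (simp add: add_pos_nonneg)
  ultimately have "0 < Re (r / f)" by (simp add: Re_divide)
  then show ?thesis
    using eq norm_f(2) norm_\<eta> abs_Re_le_cmod[of \<eta>] abs_Im_le_cmod[of \<eta>] by auto
qed

lemma eigenvalue_inverse_mult_quad_form:
  assumes "F \<in> carrier_mat n n" "G \<in> carrier_mat n n" "R \<in> carrier_mat n n"
    and "F * G = 1\<^sub>m n" and "eigenvalue (map_mat complex_of_real (G * R)) \<eta>"
  obtains x where "x \<in> carrier_vec n" "x \<noteq> 0\<^sub>v n" "quad_form R x = \<eta> * quad_form F x"
proof -
  let ?c = "map_mat complex_of_real"
  obtain x where x: "x \<in> carrier_vec n" "x \<noteq> 0\<^sub>v n" "?c (G * R) *\<^sub>v x = \<eta> \<cdot>\<^sub>v x"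
    using assms unfolding eigenvalue_def eigenvector_def by auto
  have "?c F * ?c G = 1\<^sub>m n"
    using assms of_real_hom.mat_hom_mult[of F n n G n] of_real_hom.mat_hom_one by metis
  then have "?c R *\<^sub>v x = \<eta> \<cdot>\<^sub>v (?c F *\<^sub>v x)"
    using assms x(1) x(3)[unfolded of_real_hom.mat_hom_mult[OF assms(2,3)]]
    by (intro eigenvector_left_inverse[of _ n]) auto
  then show ?thesis
    using that assms x quad_form_generalized_eigen by blast
qed

definition NASS_threshold :: "nat \<Rightarrow> real mat \<Rightarrow> real mat \<Rightarrow> real \<Rightarrow> real" where
  "NASS_threshold M T D \<delta> =
    (let C\<^sub>r = abs_entry_sum (calR M T D);
         C = (abs_entry_sum (calT M T) + abs_entry_sum (calD M D)
              + abs_entry_sum (calT M T * calD M D)) / 2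
     in 1 + 2 * (C + C * C\<^sub>r + C\<^sub>r / \<delta>))"

lemma NASS_threshold_ge_one: "\<delta> > 0 \<Longrightarrow> NASS_threshold M T D \<delta> \<ge> 1"
  unfolding NASS_threshold_def Let_def using abs_entry_sum_nonneg by simp

lemma eigenvalue_NASS_prec_inverse_mult_calR_bounds:
  assumes T: "T \<in> carrier_mat M M" "transpose_mat T = T"
    and D: "D \<in> carrier_mat M M" "diagonal_mat D"
    and \<delta>: "\<delta> > 0" and \<omega>: "\<omega> > NASS_threshold M T D \<delta>"
    and G: "G \<in> carrier_mat (2 * M) (2 * M)" "NASS_prec M T D \<omega> * G = 1\<^sub>m (2 * M)"
    and \<eta>: "eigenvalue (map_mat complex_of_real (G * calR M T D)) \<eta>"
  shows "0 < Re \<eta> \<and> Re \<eta> < \<delta> \<and> \<bar>Im \<eta>\<bar> < \<delta>"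
proof -
  define C\<^sub>r where "C\<^sub>r = abs_entry_sum (calR M T D)"
  define C where "C = (abs_entry_sum (calT M T) + abs_entry_sum (calD M D)
    + abs_entry_sum (calT M T * calD M D)) / 2"
  have \<omega>_gt: "\<omega> > 1 + 2 * (C + C * C\<^sub>r + C\<^sub>r / \<delta>)"
    using \<omega> unfolding NASS_threshold_def Let_def C_def C\<^sub>r_def .
  obtain x where x: "x \<in> carrier_vec (2 * M)" "x \<noteq> 0\<^sub>v (2 * M)"
    and eq: "quad_form (calR M T D) x = \<eta> * quad_form (NASS_prec M T D \<omega>) x"
    using eigenvalue_inverse_mult_quad_form[OF NASS_prec_carrier G(1) calR_carrier G(2) \<eta>] by metis
  have "Re (quad_form (calR M T D) x) = vec_norm2 x"
    using calR_plus_transpose[OF T D] by (rule Re_quad_form_eq_vec_norm2[OF calR_carrier x(1)])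
  moreover have "cmod (quad_form (calR M T D) x) \<le> C\<^sub>r * vec_norm2 x"
    unfolding C\<^sub>r_def by (rule norm_quad_form_le[OF calR_carrier x(1)])
  moreover have "cmod (quad_form (NASS_prec M T D \<omega>) x - of_real (\<omega> / 2 * vec_norm2 x))
      \<le> C * vec_norm2 x"
    unfolding C_def using \<omega> NASS_threshold_ge_one[OF \<delta>, of M T D]
    by (intro norm_quad_form_NASS_prec_sub_le[OF x(1)]) simp
  ultimately show ?thesis
    using quotient_clusters_at_zero[OF vec_norm2_pos[OF x] _ _ _ \<delta> _ eq] \<omega>_gt by simp
qed

theorem theorem4p2:
  fixes M :: nat and T D :: "real mat"
  assumes "M \<ge> 1"
    and "sym_pos_def_mat M T"
    and "D \<in> carrier_mat M M" and "diagonal_mat D" and "\<forall>i < M. D $$ (i, i) \<ge> 0"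
  shows "\<forall>\<delta> > 0. \<exists>\<Omega> > 0. \<forall>\<omega> > \<Omega>. \<forall>G \<in> carrier_mat (2 * M) (2 * M).
           G * NASS_prec M T D \<omega> = 1\<^sub>m (2 * M) \<and> NASS_prec M T D \<omega> * G = 1\<^sub>m (2 * M) \<longrightarrow>
           (\<forall>\<eta>. eigenvalue (map_mat complex_of_real (G * calR M T D)) \<eta> \<longrightarrow>
              0 < Re \<eta> \<and> Re \<eta> < \<delta> \<and> \<bar>Im \<eta>\<bar> < \<delta>)"
proof (intro allI impI)
  fix \<delta> :: real
  assume \<delta>: "\<delta> > 0"
  have T: "T \<in> carrier_mat M M" "transpose_mat T = T"
    using assms(2) unfolding sym_pos_def_mat_def by auto
  show "\<exists>\<Omega> > 0. \<forall>\<omega> > \<Omega>. \<forall>G \<in> carrier_mat (2 * M) (2 * M).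
           G * NASS_prec M T D \<omega> = 1\<^sub>m (2 * M) \<and> NASS_prec M T D \<omega> * G = 1\<^sub>m (2 * M) \<longrightarrow>
           (\<forall>\<eta>. eigenvalue (map_mat complex_of_real (G * calR M T D)) \<eta> \<longrightarrow>
              0 < Re \<eta> \<and> Re \<eta> < \<delta> \<and> \<bar>Im \<eta>\<bar> < \<delta>)"
    using NASS_threshold_ge_one[OF \<delta>, of M T D]
      eigenvalue_NASS_prec_inverse_mult_calR_bounds[OF T assms(3,4) \<delta>]
    by (intro exI[of _ "NASS_threshold M T D \<delta>"]) auto
qed

end
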